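(* Let $d\ge2$ and let $Q$ be a qplex. (1) If $s_1,\dots,s_{d^2}\in Q\cap S_{\rm o}$ are the vertices of a regular simplex, then $r(i|j)=s_i(j)$ defines a type-preserving measurement for $Q$, with stretched measurement matrix $R_{ij}=(d+1)s_i(j)-\frac1d$. (2) If $R$ is a $d^2\times d^2$ real orthogonal matrix such that $RQ=\{Rq:q\in Q\}$ is a qplex, then $R$ is the stretched measurement matrix of a type-preserving measurement for $Q$.
   Context: Fix an integer $d\ge 2$. $\langle\cdot,\cdot\rangle$ is the standard inner product on $\mathbb{R}^{d^2}$, $\|\cdot\|$ the Euclidean norm. $\Delta=\{p\in\mathbb{R}^{d^2}: p(i)\ge0,\ \sum_ip(i)=1\}$; $H=\{u\in\mathbb{R}^{d^2}:\sum_i u(i)=1\}$; $c=(1/d^2,\dots,1/d^2)$. For $A\subseteq H$ the polar is $A^*=\{u\in H:\langle u,v\rangle\ge\frac{1}{d(d+1)}\ \forall v\in A\}$. Out-ball $B_{\rm o}=\{u\in H:\|u-c\|\le r_{\rm o}\}$, $r_{\rm o}^2=\frac{d-1}{d^2(d+1)}$, boundary sphere $S_{\rm o}$. A qplex is a set $Q\subseteq\Delta\cap B_{\rm o}$ with $Q^*=Q$. A measurement (with $d^2$ outcomes) is an array of reals $r(i|j)\ge0$, $i,j\in\{1,\dots,d^2\}$, with $\sum_i r(i|j)=1$ for every $j$. For a qplex $Q$ and $q\in Q$, define $q_r(i)=\sum_j\big[(d+1)q(j)-\frac1d\big]r(i|j)$ and $Q_r=\{q_r:q\in Q\}$. The measurement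 is type-preserving for $Q$ if $Q_r$ is a qplex, and $Q$-preserving if $Q_r=Q$. Its stretched measurement matrix is $R_{ij}=(d+1)r(i|j)-\frac1d\sum_k r(i|k)$, so that $q_r=Rq$. Points $s_1,\dots,s_{d^2}$ are vertices of a regular simplex if they are distinct and all pairwise distances are equal. *)

theory Defs
  imports "HOL-Analysis.Analysis"
begin

text \<open>Vectors in R^(d^2) are modelled as real^'n with CARD('n) = d^2.
  Coordinates are indexed by the finite type 'n.\<close>

definition prob_simplex :: "(real^'n) set" where
  "prob_simplex = {p. (\<forall>i. p$i \<ge> 0) \<and> (\<Sum>i\<in>UNIV. p$i) = 1}"

definition hyperplane_H :: "(real^'n) set" where
  "hyperplane_H = {u. (\<Sum>i\<in>UNIV. u$i) = 1}"

definition centre :: "nat \<Rightarrow> real^'n" where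
  "centre d = (\<chi> i. 1 / (real d)^2)"

definition polar :: "nat \<Rightarrow> (real^'n) set \<Rightarrow> (real^'n) set" where
  "polar d A = {u \<in> hyperplane_H. \<forall>v\<in>A. inner u v \<ge> 1 / (real d * (real d + 1))}"

definition out_radius :: "nat \<Rightarrow> real" where
  "out_radius d = sqrt ((real d - 1) / ((real d)^2 * (real d + 1)))"

definition out_ball :: "nat \<Rightarrow> (real^'n) set" where
  "out_ball d = {u \<in> hyperplane_H. norm (u - centre d) \<le> out_radius d}"

definition out_sphere :: "nat \<Rightarrow> (real^'n) set" where
  "out_sphere d = {u \<in> hyperplane_H. norm (u - centre d) = out_radius d}"

definition qplex :: "nat \<Rightarrow> (real^'n) set \<Rightarrow> bool" where
  "qplex d Q \<longleftrightarrow> Q \<subseteq> prob_simplex \<inter> out_ball d \<and> polar d Q = Q"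

text \<open>A measurement: r i j = r(i|j).\<close>
definition measurement :: "('n \<Rightarrow> 'n \<Rightarrow> real) \<Rightarrow> bool" where
  "measurement r \<longleftrightarrow> (\<forall>i j. r i j \<ge> 0) \<and> (\<forall>j. (\<Sum>i\<in>UNIV. r i j) = 1)"

definition meas_apply :: "nat \<Rightarrow> ('n \<Rightarrow> 'n \<Rightarrow> real) \<Rightarrow> real^'n \<Rightarrow> real^'n" where
  "meas_apply d r q = (\<chi> i. \<Sum>j\<in>UNIV. ((real d + 1) * q$j - 1 / real d) * r i j)"

definition type_preserving :: "nat \<Rightarrow> (real^'n) set \<Rightarrow> ('n \<Rightarrow> 'n \<Rightarrow> real) \<Rightarrow> bool" where
  "type_preserving d Q r \<longleftrightarrow> measurement r \<and> qplex d (meas_apply d r ` Q)"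

definition stretched_matrix :: "nat \<Rightarrow> ('n \<Rightarrow> 'n \<Rightarrow> real) \<Rightarrow> real^'n^'n" where
  "stretched_matrix d r = (\<chi> i j. (real d + 1) * r i j - (1 / real d) * (\<Sum>k\<in>UNIV. r i k))"

definition regular_simplex_vertices :: "('n \<Rightarrow> real^'n) \<Rightarrow> bool" where
  "regular_simplex_vertices s \<longleftrightarrow> inj s \<and>
     (\<exists>\<delta>. \<forall>i j. i \<noteq> j \<longrightarrow> dist (s i) (s j) = \<delta>)"

end

theory Submission
  imports Defs
begin

text \<open>
  (1) The centred vertices \<open>a\<^sub>i = s\<^sub>i - c\<close> of a regular simplex inscribed in \<open>S\<^sub>o\<close> have
  Gram matrix \<open>r\<^sub>o\<^sup>2\<close> on the diagonal and a constant \<open>\<gamma> < r\<^sub>o\<^sup>2\<close> off it. These \<open>d\<^sup>2\<close>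
  vectors are orthogonal to \<open>1\<close>, hence linearly dependent, and the constant Gram entries force
  the dependence to be \<open>\<Sum>a\<^sub>i = 0\<close>; so \<open>\<gamma> = -r\<^sub>o\<^sup>2/(d\<^sup>2-1)\<close>, which makes the rows
  \<open>(d+1)a\<^sub>i + 1/d\<^sup>2\<close> of \<open>R\<close> orthonormal. \<open>R\<close> also fixes \<open>1\<close>, and \<open>Rq \<ge> 0\<close> on \<open>Q\<close> because
  \<open>Q\<close> is self-polar. An orthogonal map fixing \<open>1\<close> fixes \<open>c\<close> and commutes with taking polars,
  so it maps qplexes with nonnegative image to qplexes.

  (2) The points \<open>e\<^sub>j/(d+1) + 1/(d(d+1))\<close> lie in the polar of the whole simplex, hence in
  every qplex, so \<open>R\<close> maps them into the simplex. Summing their coordinates shows that the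
  columns of \<open>R\<close> sum to \<open>1\<close>, by orthogonality so do its rows, and then
  \<open>r(i|j) = (R\<^sub>i\<^sub>j + 1/d)/(d+1)\<close> is the \<open>i\<close>-th coordinate of the image of the \<open>j\<close>-th point:
  a measurement whose stretched matrix is \<open>R\<close>.
\<close>

lemma orthogonal_matrix_vector_cancel:
  fixes R :: "real^'n^'n"
  assumes "orthogonal_matrix R"
  shows "R *v (x v* R) = x" and "(R *v x) v* R = x"
  using assms
  by (metis matrix_vector_mul_assoc matrix_vector_mul_lid orthogonal_matrix_def transpose_matrix_vector)+

lemma orthogonal_matrix_inner:
  fixes R :: "real^'n^'n"
  assumes "orthogonal_matrix R"
  shows "(R *v x) \<bullet> (R *v y) = x \<bullet> y"
  by (metis assms dot_lmul_matrix orthogonal_matrix_vector_cancel(2))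

lemma orthogonal_matrix_norm:
  fixes R :: "real^'n^'n"
  assumes "orthogonal_matrix R"
  shows "norm (R *v x) = norm x"
  using orthogonal_matrix_inner[OF assms] by (simp add: norm_eq_sqrt_inner)

lemma orthogonal_matrix_transpose_fixpoint:
  fixes R :: "real^'n^'n"
  assumes "orthogonal_matrix R" "R *v v = v"
  shows "v v* R = v"
  by (metis assms orthogonal_matrix_vector_cancel(2))

lemma hyperplane_H_iff_inner_one: "u \<in> hyperplane_H \<longleftrightarrow> u \<bullet> 1 = 1"
  by (simp add: hyperplane_H_def inner_vec_def)

lemma prob_simplex_subset_hyperplane_H: "prob_simplex \<subseteq> hyperplane_H"
  by (auto simp: prob_simplex_def hyperplane_H_def)

lemma qplex_subset_prob_simplex: "qplex d Q \<Longrightarrow> Q \<subseteq> prob_simplex"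
  by (auto simp: qplex_def)

lemma centre_eq_scaleR_one: "centre d = (1 / (real d)^2) *\<^sub>R 1"
  by (simp add: centre_def vec_eq_iff)

lemma centre_inner_one:
  assumes "d > 0" "CARD('n) = d^2"
  shows "centre d \<bullet> (1 :: real^'n) = 1"
  using assms by (simp add: centre_def inner_vec_def)

lemma polar_antimono: "A \<subseteq> B \<Longrightarrow> polar d B \<subseteq> polar d A"
  by (auto simp: polar_def)

lemma orthogonal_image_polar_subset:
  fixes R :: "real^'n^'n"
  assumes "orthogonal_matrix R" "R *v 1 = 1"
  shows "(\<lambda>q. R *v q) ` polar d A \<subseteq> polar d ((\<lambda>q. R *v q) ` A)"
  using orthogonal_matrix_inner[OF assms(1)] orthogonal_matrix_inner[OF assms(1), of _ 1]
  by (auto simp: polar_def hyperplane_H_iff_inner_one assms(2))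

lemma polar_orthogonal_image:
  fixes R :: "real^'n^'n"
  assumes R: "orthogonal_matrix R" "R *v 1 = 1"
  shows "polar d ((\<lambda>q. R *v q) ` A) = (\<lambda>q. R *v q) ` polar d A"
proof
  show "(\<lambda>q. R *v q) ` polar d A \<subseteq> polar d ((\<lambda>q. R *v q) ` A)"
    using orthogonal_image_polar_subset[OF R] .
next
  have Rt: "orthogonal_matrix (transpose R)" "transpose R *v 1 = 1"
    using R orthogonal_matrix_transpose_fixpoint by auto
  have "(\<lambda>q. transpose R *v q) ` polar d ((\<lambda>q. R *v q) ` A) \<subseteq> polar d A"
    using orthogonal_image_polar_subset[OF Rt, of d "(\<lambda>q. R *v q) ` A"]
    by (simp add: image_image orthogonal_matrix_vector_cancel[OF R(1)])
  then show "polar d ((\<lambda>q. R *v q) ` A) \<subseteq> (\<lambda>q. R *v q) ` polar d A"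
    by (force simp: orthogonal_matrix_vector_cancel[OF R(1)])
qed

lemma qplex_orthogonal_image:
  fixes R :: "real^'n^'n"
  assumes R: "orthogonal_matrix R" "R *v 1 = 1" and Q: "qplex d Q"
    and nonneg: "\<And>q i. q \<in> Q \<Longrightarrow> 0 \<le> (R *v q) $ i"
  shows "qplex d ((\<lambda>q. R *v q) ` Q)"
proof -
  have "R *v centre d = centre d"
    using R(2) by (simp add: centre_eq_scaleR_one matrix_vector_mult_scaleR)
  then have dist_centre: "norm (R *v q - centre d) = norm (q - centre d)" for q
    by (metis R(1) matrix_vector_mult_diff_distrib orthogonal_matrix_norm)
  have "R *v q \<in> hyperplane_H \<longleftrightarrow> q \<in> hyperplane_H" for q
    by (metis R hyperplane_H_iff_inner_one orthogonal_matrix_inner)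
  with Q have "(\<lambda>q. R *v q) ` Q \<subseteq> prob_simplex \<inter> out_ball d"
    by (force simp: qplex_def out_ball_def prob_simplex_def dist_centre nonneg
        hyperplane_H_def)
  with Q show ?thesis
    by (simp add: qplex_def polar_orthogonal_image[OF R])
qed

lemma meas_apply_eq_stretched_matrix:
  assumes "q \<in> hyperplane_H"
  shows "meas_apply d r q = stretched_matrix d r *v q"
proof -
  have "(\<Sum>j\<in>UNIV. c * q$j) = c" for c
    using assms by (simp add: hyperplane_H_def flip: sum_distrib_left)
  then have "(\<Sum>j\<in>UNIV. (1 / real d * (\<Sum>k\<in>UNIV. r i k)) * q$j) = (\<Sum>j\<in>UNIV. 1 / real d * r i j)" for i
    by (simp add: sum_distrib_left)
  then show ?thesis
    by (simp add: vec_eq_iff meas_apply_def stretched_matrix_def matrix_vector_mult_def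
        algebra_simps sum_subtractf)
qed

lemma type_preserving_iff_stretched_image:
  assumes "qplex d Q"
  shows "type_preserving d Q r \<longleftrightarrow>
    measurement r \<and> qplex d ((\<lambda>q. stretched_matrix d r *v q) ` Q)"
proof -
  have "meas_apply d r ` Q = (\<lambda>q. stretched_matrix d r *v q) ` Q"
    using assms qplex_subset_prob_simplex prob_simplex_subset_hyperplane_H
    by (auto intro!: image_cong meas_apply_eq_stretched_matrix)
  then show ?thesis by (simp add: type_preserving_def)
qed

text \<open>The probability vector \<open>p(i) = tr(\<Pi>\<^sub>i\<Pi>\<^sub>j)/d\<close> of the \<open>j\<close>-th SIC projector.\<close>

definition basis_distribution :: "nat \<Rightarrow> 'n \<Rightarrow> real^'n" where
  "basis_distribution d j =
     (1 / (real d + 1)) *\<^sub>R axis j 1 + (1 / (real d * (real d + 1))) *\<^sub>R 1"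

lemma inner_basis_distribution:
  "basis_distribution d j \<bullet> v = v $ j / (real d + 1) + (v \<bullet> 1) / (real d * (real d + 1))"
  by (simp add: basis_distribution_def inner_add_left inner_axis' inner_commute[of 1 v])

lemma basis_distribution_mem_hyperplane_H:
  assumes "d > 0" "CARD('n) = d^2"
  shows "(basis_distribution d j :: real^'n) \<in> hyperplane_H"
proof -
  have "1 / (real d + 1) + (real d)^2 / (real d * (real d + 1)) = 1"
    using assms(1) by (simp add: power2_eq_square flip: add_divide_distrib)
  moreover have "(1::real^'n) \<bullet> 1 = (real d)^2"
    using assms(2) by (simp add: inner_vec_def)
  ultimately show ?thesis
    by (simp add: hyperplane_H_iff_inner_one inner_basis_distribution)
qed

lemma basis_distribution_mem_polar:
  fixes A :: "(real^'n) set"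
  assumes "d > 0" "CARD('n) = d^2" "A \<subseteq> prob_simplex"
  shows "basis_distribution d j \<in> polar d A"
  unfolding polar_def
proof (intro CollectI conjI ballI)
  show "basis_distribution d j \<in> hyperplane_H"
    using basis_distribution_mem_hyperplane_H[OF assms(1,2)] .
next
  fix v assume "v \<in> A"
  then have "v \<in> prob_simplex" using assms(3) by blast
  then have "v \<bullet> 1 = 1" and "0 \<le> v $ j"
    using prob_simplex_subset_hyperplane_H by (auto simp: prob_simplex_def hyperplane_H_iff_inner_one)
  then show "1 / (real d * (real d + 1)) \<le> basis_distribution d j \<bullet> v"
    by (simp add: inner_basis_distribution)
qed

lemma basis_distribution_mem_qplex:
  fixes Q :: "(real^'n) set"
  assumes "d > 0" "CARD('n) = d^2" "qplex d Q"
  shows "basis_distribution d j \<in> Q"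
  using basis_distribution_mem_polar[OF assms(1,2) qplex_subset_prob_simplex[OF assms(3)]] assms(3)
  by (simp add: qplex_def)

lemma matrix_vector_mult_basis_distribution:
  "(R *v basis_distribution d j) $ i
     = R$i$j / (real d + 1) + (R *v 1) $ i / (real d * (real d + 1))"
  by (simp add: basis_distribution_def matrix_vector_mult_scaleR matrix_vector_mult_basis column_def
      matrix_vector_right_distrib)

lemma column_sums_eq_one_of_basis_distribution_images:
  fixes R :: "real^'n^'n"
  assumes d: "d > 0" "CARD('n) = d^2"
    and images: "\<And>j. R *v basis_distribution d j \<in> hyperplane_H"
  shows "1 v* R = 1"
proof -
  define \<sigma> where "\<sigma> = 1 v* R"
  define \<tau> where "\<tau> = \<sigma> \<bullet> 1"
  have "1 = (R *v basis_distribution d j) \<bullet> 1" for j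
    using images[of j] by (simp add: hyperplane_H_iff_inner_one)
  also have "\<dots> j = basis_distribution d j \<bullet> \<sigma>" for j
    by (metis \<sigma>_def dot_lmul_matrix inner_commute)
  finally have "\<sigma> $ j / (real d + 1) + \<tau> / (real d * (real d + 1)) = 1" for j
    by (simp add: inner_basis_distribution \<tau>_def)
  then have \<sigma>: "\<sigma> $ j = real d + 1 - \<tau> / real d" for j
    using d(1) by (simp add: divide_simps) (simp add: algebra_simps)
  have "\<tau> = (\<Sum>j\<in>UNIV. \<sigma> $ j)"
    by (simp add: \<tau>_def inner_vec_def)
  also have "\<dots> = (real d)^2 * (real d + 1 - \<tau> / real d)"
    using d(2) by (simp only: \<sigma>) simp
  finally have "\<tau> * (real d + 1) = (real d)^2 * (real d + 1)"
    using d(1) by (simp add: algebra_simps power2_eq_square)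
  then have "\<tau> = (real d)^2"
    by simp
  then have "\<sigma> = 1"
    using d(1) by (simp add: vec_eq_iff \<sigma> power2_eq_square)
  then show ?thesis
    by (simp add: \<sigma>_def)
qed

definition unstretched_measurement :: "nat \<Rightarrow> real^'n^'n \<Rightarrow> 'n \<Rightarrow> 'n \<Rightarrow> real" where
  "unstretched_measurement d R i j = (R$i$j + 1 / real d) / (real d + 1)"

lemma unstretched_measurement_eq_basis_distribution_image:
  assumes "R *v 1 = 1"
  shows "unstretched_measurement d R i j = (R *v basis_distribution d j) $ i"
  using assms
  by (simp add: unstretched_measurement_def matrix_vector_mult_basis_distribution add_divide_distrib)

lemma measurement_unstretched_measurement:
  assumes "R *v 1 = 1" and images: "\<And>j. R *v basis_distribution d j \<in> prob_simplex"
  shows "measurement (unstretched_measurement d R)"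
  using images
  by (simp add: measurement_def unstretched_measurement_eq_basis_distribution_image[OF assms(1)]
      prob_simplex_def)

lemma stretched_matrix_unstretched_measurement:
  assumes d: "d > 0" "CARD('n) = d^2" and R: "R *v 1 = (1 :: real^'n)"
  shows "stretched_matrix d (unstretched_measurement d R) = R"
proof -
  have "(\<Sum>k\<in>UNIV. R$i$k) = 1" for i
    using R by (simp add: vec_eq_iff matrix_vector_mult_def)
  then have "(\<Sum>k\<in>UNIV. unstretched_measurement d R i k) = 1" for i
    using d by (simp add: unstretched_measurement_def sum.distrib power2_eq_square add.commute
        flip: sum_divide_distrib)
  then show ?thesis
    using d(1) by (simp add: stretched_matrix_def unstretched_measurement_def vec_eq_iff)
qed

lemma orthogonal_qplex_image_type_preserving:
  fixes R :: "real^'n^'n"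
  assumes d: "d > 0" "CARD('n) = d^2" and Q: "qplex d Q"
    and R: "orthogonal_matrix R" "qplex d ((\<lambda>q. R *v q) ` Q)"
  shows "\<exists>r. type_preserving d Q r \<and> stretched_matrix d r = R"
proof -
  have images: "R *v basis_distribution d j \<in> prob_simplex" for j
    using basis_distribution_mem_qplex[OF d Q] R(2) qplex_subset_prob_simplex by blast
  then have "1 v* R = 1"
    using column_sums_eq_one_of_basis_distribution_images[OF d]
      prob_simplex_subset_hyperplane_H by blast
  then have R1: "R *v 1 = 1"
    using orthogonal_matrix_transpose_fixpoint[of "transpose R"] R(1) by simp
  have "stretched_matrix d (unstretched_measurement d R) = R"
    using stretched_matrix_unstretched_measurement[OF d R1] .
  moreover have "measurement (unstretched_measurement d R)"
    using measurement_unstretched_measurement[OF R1 images] .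
  ultimately show ?thesis
    using R(2) by (auto simp: type_preserving_iff_stretched_image[OF Q])
qed

lemma sum_times_if_eq:
  fixes y :: "'n::finite \<Rightarrow> real"
  shows "(\<Sum>i\<in>UNIV. y i * (if j = i then \<rho> else \<gamma>)) = \<gamma> * sum y UNIV + y j * (\<rho> - \<gamma>)"
proof -
  have "(\<Sum>i\<in>UNIV. y i * (if j = i then \<rho> else \<gamma>))
      = (\<Sum>i\<in>UNIV. \<gamma> * y i + (if i = j then y j * (\<rho> - \<gamma>) else 0))"
    by (rule sum.cong) (auto simp: algebra_simps)
  then show ?thesis
    by (simp add: sum.distrib sum_distrib_left)
qed

lemma sum_if_eq_else:
  "(\<Sum>i\<in>(UNIV::'n::finite set). if i = j then \<rho> else \<gamma>) = (real CARD('n) - 1) * \<gamma> + (\<rho>::real)"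
proof -
  have "(\<Sum>i\<in>(UNIV::'n set). if i = j then \<rho> else \<gamma>)
      = (\<Sum>i\<in>UNIV. \<gamma> + (if i = j then \<rho> - \<gamma> else 0))"
    by (rule sum.cong) auto
  then show ?thesis
    by (simp add: sum.distrib algebra_simps)
qed

lemma exists_dependence_of_orthogonal_family:
  fixes a :: "'n \<Rightarrow> real^'n"
  assumes "u \<noteq> 0" "\<And>i. a i \<bullet> u = 0"
  obtains y :: "real^'n" where "y \<noteq> 0" "(\<Sum>i\<in>UNIV. y$i *\<^sub>R a i) = 0"
proof -
  define M :: "real^'n^'n" where "M = (\<chi> i. a i)"
  have "M *v u = 0"
    using assms(2) by (simp add: M_def vec_eq_iff matrix_vector_mul_component)
  then have "rank (transpose M) \<noteq> CARD('n)"
    using assms(1) matrix_nonfull_linear_equations_eq rank_transpose by metis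
  then obtain y where "y \<noteq> 0" "transpose M *v y = 0"
    using matrix_nonfull_linear_equations_eq by blast
  moreover have "transpose M *v y = (\<Sum>i\<in>UNIV. y$i *\<^sub>R a i)"
    by (simp add: M_def vec_eq_iff vector_matrix_mult_def sum_component)
  ultimately show thesis
    using that by simp
qed

lemma equiangular_family_sum_eq_zero:
  fixes a :: "'n::finite \<Rightarrow> 'a::real_inner"
  assumes gram: "\<And>i j. a i \<bullet> a j = (if i = j then \<rho> else \<gamma>)" and "\<gamma> \<noteq> \<rho>"
    and dependence: "(\<Sum>i\<in>UNIV. y i *\<^sub>R a i) = 0" "y k \<noteq> 0"
  shows "(\<Sum>i\<in>UNIV. a i) = 0"
proof -
  have "0 = \<gamma> * sum y UNIV + (\<rho> - \<gamma>) * y j" for j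
  proof -
    have "0 = a j \<bullet> (\<Sum>i\<in>UNIV. y i *\<^sub>R a i)"
      using dependence(1) by simp
    also have "\<dots> = \<gamma> * sum y UNIV + (\<rho> - \<gamma>) * y j"
      by (simp add: inner_sum_right gram sum_times_if_eq)
    finally show ?thesis .
  qed
  then have "y j = y k" for j
    using \<open>\<gamma> \<noteq> \<rho>\<close> by (metis add_left_cancel mult_cancel_left right_minus_eq)
  then have "y k *\<^sub>R (\<Sum>i\<in>UNIV. a i) = (\<Sum>i\<in>UNIV. y i *\<^sub>R a i)"
    unfolding scaleR_sum_right by (intro sum.cong refl) metis
  with dependence show ?thesis
    by simp
qed

lemma equiangular_sum_eq_zero_gram:
  fixes a :: "'n::finite \<Rightarrow> 'a::real_inner"
  assumes gram: "\<And>i j. a i \<bullet> a j = (if i = j then \<rho> else \<gamma>)"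
    and sum: "(\<Sum>i\<in>UNIV. a i) = 0"
  shows "(real CARD('n) - 1) * \<gamma> + \<rho> = 0"
proof -
  have "0 = (\<Sum>i\<in>UNIV. a i) \<bullet> (\<Sum>j\<in>UNIV. a j)"
    using sum by simp
  also have "\<dots> = real CARD('n) * ((real CARD('n) - 1) * \<gamma> + \<rho>)"
    by (simp add: inner_sum_left inner_sum_right gram sum_if_eq_else)
  finally show ?thesis
    by simp
qed

lemma regular_simplex_gram:
  fixes s :: "'n::finite \<Rightarrow> 'a::real_inner"
  assumes "2 \<le> CARD('n)" "inj s" and dist: "\<And>i j. i \<noteq> j \<Longrightarrow> dist (s i) (s j) = \<delta>"
    and radius: "\<And>i. norm (s i - c) = r"
  obtains \<gamma> where "\<gamma> < r^2"
    and "\<And>i j. (s i - c) \<bullet> (s j - c) = (if i = j then r^2 else \<gamma>)"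
proof
  obtain i j :: 'n where "i \<noteq> j"
    using assms(1) by (meson card_2_iff' ex_card)
  then have "0 < \<delta>"
    using assms(2) dist[of i j] dist_pos_lt[of "s i" "s j"] by (simp add: inj_eq)
  then show "r^2 - \<delta>^2 / 2 < r^2"
    by simp
next
  fix i j
  have "(s i - c) \<bullet> (s j - c) = (r^2 + r^2 - dist (s i) (s j)^2) / 2"
    by (simp add: dot_norm_neg radius dist_norm)
  then show "(s i - c) \<bullet> (s j - c) = (if i = j then r^2 else r^2 - \<delta>^2 / 2)"
    by (auto simp: dist)
qed

lemma out_radius_squared:
  "1 \<le> d \<Longrightarrow> (out_radius d)^2 = (real d - 1) / ((real d)^2 * (real d + 1))"
  by (simp add: out_radius_def)

lemma stretched_simplex_coefficients:
  fixes x :: real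
  assumes "1 < x" and \<gamma>: "(x^2 - 1) * \<gamma> + (x - 1) / (x^2 * (x + 1)) = 0"
  shows "(x + 1)^2 * ((x - 1) / (x^2 * (x + 1))) + 1 / x^2 = 1"
    and "(x + 1)^2 * \<gamma> + 1 / x^2 = 0"
proof -
  show "(x + 1)^2 * ((x - 1) / (x^2 * (x + 1))) + 1 / x^2 = 1"
    using assms(1) by (simp add: divide_simps) (simp add: algebra_simps power2_eq_square)
  have "(x - 1) * ((x + 1)^2 * \<gamma> + 1 / x^2)
      = (x + 1) * ((x^2 - 1) * \<gamma> + (x - 1) / (x^2 * (x + 1)))"
    using assms(1) by (simp add: divide_simps) (simp add: algebra_simps power2_eq_square)
  then show "(x + 1)^2 * \<gamma> + 1 / x^2 = 0"
    using assms by simp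
qed

lemma stretched_matrix_of_hyperplane_rows:
  assumes "\<And>i. s i \<in> hyperplane_H"
  shows "stretched_matrix d (\<lambda>i j. s i $ j) = (\<chi> i j. (real d + 1) * s i $ j - 1 / real d)"
  using assms by (simp add: stretched_matrix_def hyperplane_H_def)

lemma stretched_simplex_fixes_one:
  fixes s :: "'n \<Rightarrow> real^'n"
  assumes "d > 0" "CARD('n) = d^2" "\<And>i. s i \<in> hyperplane_H"
  shows "(\<chi> i j. (real d + 1) * s i $ j - 1 / real d) *v 1 = (1 :: real^'n)"
  using assms
  by (simp add: vec_eq_iff matrix_vector_mult_def sum_subtractf hyperplane_H_def power2_eq_square
      flip: sum_distrib_left)

lemma stretched_simplex_nonneg_on_polar:
  fixes s :: "'n \<Rightarrow> real^'n"
  assumes "d > 0" "q \<in> polar d (range s)"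
  shows "0 \<le> ((\<chi> i j. (real d + 1) * s i $ j - 1 / real d) *v q) $ i"
proof -
  have "q \<bullet> 1 = 1" and lower: "1 / (real d * (real d + 1)) \<le> q \<bullet> s i"
    using assms(2) by (auto simp: polar_def hyperplane_H_iff_inner_one)
  have "((\<chi> i j. (real d + 1) * s i $ j - 1 / real d) *v q) $ i
      = (real d + 1) * (q \<bullet> s i) - (q \<bullet> 1) / real d"
    by (simp add: matrix_vector_mult_def inner_vec_def algebra_simps sum_subtractf
        sum_distrib_left sum_divide_distrib)
  also have "\<dots> = (real d + 1) * (q \<bullet> s i) - (real d + 1) * (1 / (real d * (real d + 1)))"
    using assms(1) \<open>q \<bullet> 1 = 1\<close> by simp
  also have "\<dots> \<ge> 0"
    using mult_left_mono[OF lower, of "real d + 1"] by simp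
  finally show ?thesis .
qed

lemma orthogonal_stretched_simplex:
  fixes s :: "'n \<Rightarrow> real^'n"
  assumes d: "2 \<le> d" "CARD('n) = d^2" and H: "\<And>i. s i \<in> hyperplane_H"
    and gram: "\<And>i j. (s i - centre d) \<bullet> (s j - centre d) = (if i = j then (out_radius d)^2 else \<gamma>)"
    and \<gamma>: "((real d)^2 - 1) * \<gamma> + (out_radius d)^2 = 0"
  shows "orthogonal_matrix (\<chi> i j. (real d + 1) * s i $ j - 1 / real d)"
proof -
  let ?R = "\<chi> i j. (real d + 1) * s i $ j - 1 / real d"
  have "(real d + 1) * (a - 1 / (real d)^2) + 1 / (real d)^2 = (real d + 1) * a - 1 / real d" for a
    using d(1) by (simp add: divide_simps) (simp add: algebra_simps power2_eq_square)
  then have row: "?R $ i = (real d + 1) *\<^sub>R (s i - centre d) + (1 / (real d)^2) *\<^sub>R 1" for i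
    by (simp add: vec_eq_iff centre_def)
  have perp: "(s i - centre d) \<bullet> 1 = 0" for i
    using H[of i] d centre_inner_one[of d] by (simp add: hyperplane_H_iff_inner_one inner_diff_left)
  moreover have "1 \<bullet> (s i - centre d) = 0" for i
    by (metis perp inner_commute)
  moreover have "(1::real^'n) \<bullet> 1 = (real d)^2"
    using d(2) by (simp add: inner_vec_def)
  ultimately have rows: "?R $ i \<bullet> ?R $ j
      = (real d + 1)^2 * (if i = j then (out_radius d)^2 else \<gamma>) + 1 / (real d)^2" for i j
    unfolding row using d(1)
    by (simp add: inner_add_left inner_add_right gram power2_eq_square)
  moreover have "(real d + 1)^2 * (out_radius d)^2 + 1 / (real d)^2 = 1"
    and "(real d + 1)^2 * \<gamma> + 1 / (real d)^2 = 0"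
    using stretched_simplex_coefficients[of "real d" \<gamma>] d(1) \<gamma>
    by (simp_all add: out_radius_squared)
  moreover have "row i ?R = ?R $ i" for i
    by (simp only: row_def vec_lambda_eta)
  ultimately show ?thesis
    unfolding orthogonal_matrix_orthonormal_rows norm_eq_1 orthogonal_def by simp
qed

lemma measurement_of_centred_family:
  fixes s :: "'n \<Rightarrow> real^'n"
  assumes "d > 0" "CARD('n) = d^2" "\<And>i. s i \<in> prob_simplex"
    and centred: "(\<Sum>i\<in>UNIV. s i - centre d) = 0"
  shows "measurement (\<lambda>i j. s i $ j)"
proof -
  have "(\<Sum>i\<in>UNIV. s i $ j) = 1" for j
  proof -
    have "0 = (\<Sum>i\<in>UNIV. s i - centre d) $ j"
      using centred by simp
    also have "\<dots> = (\<Sum>i\<in>UNIV. s i $ j - centre d $ j)"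
      by (simp only: sum_component vector_minus_component)
    also have "\<dots> = (\<Sum>i\<in>UNIV. s i $ j) - 1"
      using assms(1,2) by (simp add: sum_subtractf centre_def)
    finally show ?thesis
      by simp
  qed
  with assms(3) show ?thesis
    by (simp add: measurement_def prob_simplex_def)
qed

lemma inscribed_regular_simplex_gram:
  fixes s :: "'n \<Rightarrow> real^'n"
  assumes d: "2 \<le> d" "CARD('n) = d^2"
    and s: "\<And>i. s i \<in> out_sphere d" "regular_simplex_vertices s"
  obtains \<gamma> where
    "\<And>i j. (s i - centre d) \<bullet> (s j - centre d) = (if i = j then (out_radius d)^2 else \<gamma>)"
    and "((real d)^2 - 1) * \<gamma> + (out_radius d)^2 = 0"
    and "(\<Sum>i\<in>UNIV. s i - centre d) = 0"
proof -
  have card: "2 \<le> CARD('n)"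
    using d power_increasing[of 1 2 d] by simp
  obtain \<delta> where inj: "inj s" and dist: "\<And>i j. i \<noteq> j \<Longrightarrow> dist (s i) (s j) = \<delta>"
    using s(2) by (auto simp: regular_simplex_vertices_def)
  have radius: "norm (s i - centre d) = out_radius d" for i
    using s(1) by (simp add: out_sphere_def)
  obtain \<gamma> where "\<gamma> < (out_radius d)^2" and gram:
    "\<And>i j. (s i - centre d) \<bullet> (s j - centre d) = (if i = j then (out_radius d)^2 else \<gamma>)"
    using regular_simplex_gram[OF card inj dist radius] by blast
  have one: "(1 :: real^'n) \<noteq> 0"
    by (simp add: vec_eq_iff)
  have perp: "(s i - centre d) \<bullet> 1 = 0" for i
    using s(1)[of i] centre_inner_one[of d] d
    by (simp add: out_sphere_def hyperplane_H_iff_inner_one inner_diff_left)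
  obtain y :: "real^'n" where "y \<noteq> 0" "(\<Sum>i\<in>UNIV. y$i *\<^sub>R (s i - centre d)) = 0"
    using exists_dependence_of_orthogonal_family[OF one perp] .
  then have centred: "(\<Sum>i\<in>UNIV. s i - centre d) = 0"
    using equiangular_family_sum_eq_zero[OF gram, of "\<lambda>i. y$i"] \<open>\<gamma> < (out_radius d)^2\<close>
    by (auto simp: vec_eq_iff)
  then have "((real d)^2 - 1) * \<gamma> + (out_radius d)^2 = 0"
    using equiangular_sum_eq_zero_gram[OF gram] d(2) by simp
  with gram centred show thesis
    using that by blast
qed

lemma regular_simplex_type_preserving:
  fixes Q :: "(real^'n) set" and s :: "'n \<Rightarrow> real^'n"
  assumes d: "2 \<le> d" "CARD('n) = d^2" and Q: "qplex d Q"
    and s: "\<And>i. s i \<in> Q \<inter> out_sphere d" "regular_simplex_vertices s"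
  shows "type_preserving d Q (\<lambda>i j. s i $ j) \<and>
    stretched_matrix d (\<lambda>i j. s i $ j) = (\<chi> i j. (real d + 1) * s i $ j - 1 / real d)"
proof -
  let ?R = "\<chi> i j. (real d + 1) * s i $ j - 1 / real d"
  have d0: "0 < d"
    using d(1) by simp
  have H: "s i \<in> hyperplane_H" for i
    using s(1) by (simp add: out_sphere_def)
  obtain \<gamma> where gram:
    "\<And>i j. (s i - centre d) \<bullet> (s j - centre d) = (if i = j then (out_radius d)^2 else \<gamma>)"
    and "((real d)^2 - 1) * \<gamma> + (out_radius d)^2 = 0"
    and centred: "(\<Sum>i\<in>UNIV. s i - centre d) = 0"
    using inscribed_regular_simplex_gram[OF d _ s(2)] s(1) by blast
  then have orth: "orthogonal_matrix ?R"
    using orthogonal_stretched_simplex[OF d H gram] by blast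
  have "Q \<subseteq> polar d (range s)"
    using Q s(1) polar_antimono[of "range s" Q d] by (auto simp: qplex_def)
  then have "qplex d ((\<lambda>q. ?R *v q) ` Q)"
    using qplex_orthogonal_image[OF orth stretched_simplex_fixes_one[OF d0 d(2) H] Q]
      stretched_simplex_nonneg_on_polar[OF d0] by blast
  moreover have "measurement (\<lambda>i j. s i $ j)"
    using measurement_of_centred_family[OF d0 d(2) _ centred] s(1) Q
    by (auto simp: qplex_def)
  ultimately show ?thesis
    by (simp add: type_preserving_iff_stretched_image[OF Q] stretched_matrix_of_hyperplane_rows[OF H])
qed

theorem mainTheorem11:
  fixes d :: nat and Q :: "(real^'n) set"
  assumes "d \<ge> 2" and "CARD('n) = d^2" and "qplex d Q"
  shows "(\<forall>s :: 'n \<Rightarrow> real^'n.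
            (\<forall>i. s i \<in> Q \<inter> out_sphere d) \<and> regular_simplex_vertices s \<longrightarrow>
            type_preserving d Q (\<lambda>i j. s i $ j) \<and>
            stretched_matrix d (\<lambda>i j. s i $ j) = (\<chi> i j. (real d + 1) * s i $ j - 1 / real d))
       \<and> (\<forall>R :: real^'n^'n. orthogonal_matrix R \<and> qplex d ((\<lambda>q. R *v q) ` Q) \<longrightarrow>
            (\<exists>r. type_preserving d Q r \<and> stretched_matrix d r = R))"
proof -
  have "0 < d"
    using assms(1) by simp
  then show ?thesis
    using regular_simplex_type_preserving[OF assms] orthogonal_qplex_image_type_preserving[OF _ assms(2,3)]
    by blast
qed

end
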